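(* Let $U\subset\mathbb{R}^m$ be open with coordinates $q=(q^a,q^\alpha)$, $1\le a\le m-n$, $1\le\alpha\le n$; let $g=(g_{ij})$ be a Riemannian metric on $U$, $V\colon U\to\mathbb{R}$ smooth, $\Gamma^\alpha_a\colon U\to\mathbb{R}$ smooth, and $h>0$. Define $$\mathbb{L}_d(q_0,q_1)=\frac{1}{2h}g_{ij}(q_0)(q_1^i-q_0^i)(q_1^j-q_0^j)-hV(q_0),$$ $$C_d=\{(q_0,q_1)\in U\times U:\ q_1^\alpha-q_0^\alpha=\Gamma^\alpha_a(q_0)(q_1^a-q_0^a),\ 1\le\alpha\le n\},$$ and $L_d=\mathbb{L}_d|_{C_d}$. Let $\gamma_{ab}=g_{ab}+g_{a\alpha}\Gamma^\alpha_b+g_{b\alpha}\Gamma^\alpha_a+g_{\alpha\beta}\Gamma^\alpha_a\Gamma^\beta_b$, $(\gamma^{ab})$ its inverse matrix, and define $H\colon T^*U\to\mathbb{R}$ by $H(q,p)=\frac12\gamma^{ab}(q)P_aP_b+V(q)$ with $P_a=p_a+p_\alpha\Gamma^\alpha_a(q)$. Then the set $\Upsilon(\Sigma_{L_d})\subset T^*U\times T^*U$ coincides with the set of $(q_0,p_0,q_1,p_1)$ satisfying the symplectic Euler scheme $$p_1=p_0-h\frac{\partial H}{\partial q}(q_0,p_1),\qquad q_1=q_0+h\frac{\partial H}{\partial p}(q_0,p_1).$$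
   Context: $\gamma_{ab}$ is invertible since $g$ is Riemannian. For a submanifold $N\subset Q$ and $f\colon N\to\mathbb{R}$, $\Sigma_f=\{\mu\in T^*Q:\ \pi_Q(\mu)\in N,\ \langle\mu,v\rangle=\langle df,v\rangle\ \forall v\in T_{\pi_Q(\mu)}N\}$; $\Sigma_{L_d}\subset T^*(U\times U)$ is this set for $Q=U\times U$, $N=C_d$, $f=L_d$. Concretely, with constraint functions $\phi^\alpha_d(q_0,q_1)=q_1^\alpha-q_0^\alpha-\Gamma^\alpha_a(q_0)(q_1^a-q_0^a)$, $\Sigma_{L_d}$ consists of covectors $(\mu_0,\mu_1)$ at points of $C_d$ with $\mu_0=\partial_{q_0}\mathbb{L}_d+\lambda_\alpha\partial_{q_0}\phi^\alpha_d$, $\mu_1=\partial_{q_1}\mathbb{L}_d+\lambda_\alpha\partial_{q_1}\phi^\alpha_d$ for some multipliers $\lambda_\alpha$. $\Upsilon\colon T^*(U\times U)\to T^*U\times T^*U$ is $\Upsilon(\gamma_{q_0},\gamma_{q_1})=(-\gamma_{q_0},\gamma_{q_1})$ under $T^*_{(q_0,q_1)}(U\times U)\cong T^*_{q_0}U\times T^*_{q_1}U$; points of $T^*U\times T^*U$ are written $(q_0,p_0,q_1,p_1)$. *)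

theory Defs
  imports "HOL-Analysis.Analysis"
begin

text \<open>Coordinates on R^m are indexed by the sum type 'k + 'n:
  index Inl a is the coordinate q^a (1 <= a <= m-n), index Inr alpha is q^alpha (1 <= alpha <= n).
  Covectors in a cotangent fibre are represented by their component vectors p = (p_i).\<close>

fun Ck :: "nat \<Rightarrow> ('a::real_normed_vector) set \<Rightarrow> ('a \<Rightarrow> real) \<Rightarrow> bool" where
  "Ck 0 S f = continuous_on S f"
| "Ck (Suc k) S f = (f differentiable_on S \<and> (\<forall>v. Ck k S (\<lambda>x. frechet_derivative f (at x) v)))"

definition smooth_on :: "('a::real_normed_vector) set \<Rightarrow> ('a \<Rightarrow> real) \<Rightarrow> bool" where
  "smooth_on S f \<longleftrightarrow> (\<forall>k. Ck k S f)"

definition grad :: "(real^'i \<Rightarrow> real) \<Rightarrow> real^'i \<Rightarrow> real^'i" where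
  "grad f x = (\<chi> i. frechet_derivative f (at x) (axis i 1))"

definition riemannian_metric :: "(real^'i) set \<Rightarrow> (real^'i \<Rightarrow> real^'i^'i) \<Rightarrow> bool" where
  "riemannian_metric U g \<longleftrightarrow>
     (\<forall>i j. smooth_on U (\<lambda>q. g q $ i $ j)) \<and>
     (\<forall>q\<in>U. transpose (g q) = g q \<and> (\<forall>v. v \<noteq> 0 \<longrightarrow> v \<bullet> (g q *v v) > 0))"

definition LLd :: "real \<Rightarrow> (real^'i \<Rightarrow> real^'i^'i) \<Rightarrow> (real^'i \<Rightarrow> real)
                   \<Rightarrow> real^'i \<Rightarrow> real^'i \<Rightarrow> real" where
  "LLd h g V q0 q1 =
     (1 / (2*h)) * (\<Sum>i\<in>UNIV. \<Sum>j\<in>UNIV. g q0 $ i $ j * (q1 $ i - q0 $ i) * (q1 $ j - q0 $ j))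
     - h * V q0"

text \<open>Constraint functions phi^alpha_d(q0,q1) = q1^alpha - q0^alpha - Gamma^alpha_a(q0)(q1^a - q0^a);
  Gamma q alpha a is Gamma^alpha_a(q).\<close>
definition phid :: "(real^('k::finite+'n::finite) \<Rightarrow> 'n \<Rightarrow> 'k \<Rightarrow> real) \<Rightarrow> 'n
                    \<Rightarrow> real^('k+'n) \<Rightarrow> real^('k+'n) \<Rightarrow> real" where
  "phid \<Gamma> \<alpha> q0 q1 = q1 $ Inr \<alpha> - q0 $ Inr \<alpha>
     - (\<Sum>a\<in>UNIV. \<Gamma> q0 \<alpha> a * (q1 $ Inl a - q0 $ Inl a))"

definition Cd :: "(real^('k::finite+'n::finite)) set \<Rightarrow> (real^('k+'n) \<Rightarrow> 'n \<Rightarrow> 'k \<Rightarrow> real)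
                  \<Rightarrow> ((real^('k+'n)) \<times> (real^('k+'n))) set" where
  "Cd U \<Gamma> = {(q0, q1). q0 \<in> U \<and> q1 \<in> U \<and> (\<forall>\<alpha>. phid \<Gamma> \<alpha> q0 q1 = 0)}"

definition d0 :: "(real^'i \<Rightarrow> real^'i \<Rightarrow> real) \<Rightarrow> real^'i \<Rightarrow> real^'i \<Rightarrow> real^'i" where
  "d0 F q0 q1 = grad (\<lambda>q. F q q1) q0"
definition d1 :: "(real^'i \<Rightarrow> real^'i \<Rightarrow> real) \<Rightarrow> real^'i \<Rightarrow> real^'i \<Rightarrow> real^'i" where
  "d1 F q0 q1 = grad (\<lambda>q. F q0 q) q1"

definition SigmaLd :: "(real^('k::finite+'n::finite)) set \<Rightarrow> real \<Rightarrow> (real^('k+'n) \<Rightarrow> real^('k+'n)^('k+'n))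
     \<Rightarrow> (real^('k+'n) \<Rightarrow> real) \<Rightarrow> (real^('k+'n) \<Rightarrow> 'n \<Rightarrow> 'k \<Rightarrow> real)
     \<Rightarrow> (((real^('k+'n)) \<times> (real^('k+'n))) \<times> ((real^('k+'n)) \<times> (real^('k+'n)))) set" where
  "SigmaLd U h g V \<Gamma> = {((q0, q1), (\<mu>0, \<mu>1)). (q0, q1) \<in> Cd U \<Gamma> \<and>
     (\<exists>lam :: 'n \<Rightarrow> real.
        \<mu>0 = d0 (LLd h g V) q0 q1 + (\<Sum>\<alpha>\<in>UNIV. lam \<alpha> *\<^sub>R d0 (phid \<Gamma> \<alpha>) q0 q1) \<and>
        \<mu>1 = d1 (LLd h g V) q0 q1 + (\<Sum>\<alpha>\<in>UNIV. lam \<alpha> *\<^sub>R d1 (phid \<Gamma> \<alpha>) q0 q1))}"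

definition Upsilon :: "('a \<times> 'a) \<times> (('b::uminus) \<times> 'b) \<Rightarrow> 'a \<times> 'b \<times> 'a \<times> 'b" where
  "Upsilon x = (case x of ((q0, q1), (\<mu>0, \<mu>1)) \<Rightarrow> (q0, - \<mu>0, q1, \<mu>1))"

definition gammaM :: "(real^('k::finite+'n::finite) \<Rightarrow> real^('k+'n)^('k+'n)) \<Rightarrow> (real^('k+'n) \<Rightarrow> 'n \<Rightarrow> 'k \<Rightarrow> real)
                      \<Rightarrow> real^('k+'n) \<Rightarrow> real^'k^'k" where
  "gammaM g \<Gamma> q = (\<chi> a b. g q $ Inl a $ Inl b
      + (\<Sum>\<alpha>\<in>UNIV. g q $ Inl a $ Inr \<alpha> * \<Gamma> q \<alpha> b)
      + (\<Sum>\<alpha>\<in>UNIV. g q $ Inl b $ Inr \<alpha> * \<Gamma> q \<alpha> a)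
      + (\<Sum>\<alpha>\<in>UNIV. \<Sum>\<beta>\<in>UNIV. g q $ Inr \<alpha> $ Inr \<beta> * \<Gamma> q \<alpha> a * \<Gamma> q \<beta> b))"

definition Pmom :: "(real^('k::finite+'n::finite) \<Rightarrow> 'n \<Rightarrow> 'k \<Rightarrow> real) \<Rightarrow> real^('k+'n) \<Rightarrow> real^('k+'n) \<Rightarrow> 'k \<Rightarrow> real" where
  "Pmom \<Gamma> q p a = p $ Inl a + (\<Sum>\<alpha>\<in>UNIV. p $ Inr \<alpha> * \<Gamma> q \<alpha> a)"

definition Ham :: "(real^('k::finite+'n::finite) \<Rightarrow> real^('k+'n)^('k+'n)) \<Rightarrow> (real^('k+'n) \<Rightarrow> real)
                   \<Rightarrow> (real^('k+'n) \<Rightarrow> 'n \<Rightarrow> 'k \<Rightarrow> real) \<Rightarrow> real^('k+'n) \<Rightarrow> real^('k+'n) \<Rightarrow> real" where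
  "Ham g V \<Gamma> q p = (1/2) * (\<Sum>a\<in>UNIV. \<Sum>b\<in>UNIV.
       matrix_inv (gammaM g \<Gamma> q) $ a $ b * Pmom \<Gamma> q p a * Pmom \<Gamma> q p b) + V q"

end

theory Submission
  imports Defs
begin

(*
  Membership of
  ((q0,q1),(mu0,mu1)) in Sigma_{L_d} splits into three conditions:
   (R1) q1 - q0 is the horizontal lift of its k-part (the constraint);
   (R2) the reduced momentum P(mu1) equals gamma(q0) (q1-q0)_k / h;
   (R3) the multipliers are lambda_alpha = mu1_alpha - (g(q0)(q1-q0))_alpha / h;
  and (R1),(R2) together say exactly q1 = q0 + h dH/dp(q0,mu1).
  The momentum equation is obtained without differentiating g, Gamma or gamma^{-1}:
  the function  S(q) = LL_d(q,q1) + lambda.phi(q,q1) + mu1.q + h H(q,mu1)  is rewritten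
  (by completing the square with gamma^{-1}) as a constant plus a sum of products of
  functions vanishing at q0, so S is critical at q0 under (R1)-(R3); expanding dS(q0)=0
  gives mu0 = -mu1 - h dH/dq(q0,mu1).
*)

lemma grad_eq:
  assumes "(f has_derivative F) (at x)"
  shows "grad f x = (\<chi> i. F (axis i 1))"
  by (simp add: grad_def frechet_derivative_at[OF assms, symmetric])

lemma grad_inner:
  assumes "(f has_derivative (\<lambda>v. w \<bullet> v)) (at x)"
  shows "grad f x = w"
  using grad_eq[OF assms] by (simp add: vec_eq_iff cart_eq_inner_axis[symmetric])

lemma smooth_on_differentiable:
  assumes "smooth_on U f" "open U" "x \<in> U"
  shows "f differentiable (at x)"
proof -
  have "Ck (Suc 0) U f" using assms(1) unfolding smooth_on_def by blast
  then have "f differentiable_on U" by simp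
  then show ?thesis using assms differentiable_on_eq_differentiable_at by blast
qed

lemma differentiable_transform_open:
  assumes "f differentiable (at x)" "open S" "x \<in> S" "\<And>y. y \<in> S \<Longrightarrow> f y = g y"
  shows "g differentiable (at x)"
  using assms has_derivative_transform_within_open differentiable_def by metis

lemma differentiable_prod_fun:
  fixes f :: "'i \<Rightarrow> 'a::real_normed_vector \<Rightarrow> real"
  assumes "finite A" "\<forall>i\<in>A. f i differentiable (at x)"
  shows "(\<lambda>q. \<Prod>i\<in>A. f i q) differentiable (at x)"
  using assms by (induction A rule: finite_induct) (simp_all add: differentiable_mult)

text \<open>The determinant is a polynomial in the entries, hence differentiable with them.\<close>
lemma det_differentiable:
  fixes A :: "'a::real_normed_vector \<Rightarrow> real^'n^'n"
  assumes "\<And>i j. (\<lambda>q. A q $ i $ j) differentiable (at x)"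
  shows "(\<lambda>q. det (A q)) differentiable (at x)"
  unfolding det_def
  by (intro differentiable_sum ballI differentiable_mult differentiable_const
        differentiable_prod_fun finite_permutations finite) (simp_all add: assms)

lemma has_derivative_mult_vanishing:
  fixes f k :: "'a::real_normed_vector \<Rightarrow> real"
  assumes "(f has_derivative f') (at x)" "k differentiable (at x)" "f x = 0"
  shows "((\<lambda>q. f q * k q) has_derivative (\<lambda>v. f' v * k x)) (at x)"
proof -
  obtain k' where k: "(k has_derivative k') (at x)" using assms(2) differentiable_def by blast
  show ?thesis using has_derivative_mult[OF assms(1) k] assms(3) by simp
qed

lemma has_derivative_mult_flat:
  fixes f k :: "'a::real_normed_vector \<Rightarrow> real"
  assumes "f differentiable (at x)" "k differentiable (at x)" "f x = 0" "k x = 0"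
  shows "((\<lambda>q. f q * k q) has_derivative (\<lambda>v. 0)) (at x)"
proof -
  obtain f' where f: "(f has_derivative f') (at x)" using assms(1) differentiable_def by blast
  show ?thesis using has_derivative_mult_vanishing[OF f assms(2,3)] assms(4) by simp
qed

lemma has_derivative_nth [derivative_intros]: "((\<lambda>q. q $ i) has_derivative (\<lambda>v. v $ i)) F"
  by (rule bounded_linear_imp_has_derivative[OF bounded_linear_vec_nth])

lemma differentiable_nth [derivative_intros]: "(\<lambda>q. q $ i) differentiable F"
  using has_derivative_nth differentiable_def by blast

lemma has_derivative_matrix_shift:
  "((\<lambda>q. G *v (q - c)) has_derivative (\<lambda>v. (G::real^'n^'m) *v v)) F"
proof -
  have "((\<lambda>q. q - c) has_derivative (\<lambda>v. v - 0)) F"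
    by (intro derivative_intros)
  then show ?thesis
    using bounded_linear.has_derivative[OF matrix_vector_mul_bounded_linear] by simp
qed

lemma matrix_inv_mult:
  assumes "invertible (A::real^'n^'n)"
  shows "A ** matrix_inv A = mat 1" "matrix_inv A ** A = mat 1"
proof -
  have "\<exists>A'. A ** A' = mat 1 \<and> A' ** A = mat 1" using assms invertible_def by blast
  then have "A ** matrix_inv A = mat 1 \<and> matrix_inv A ** A = mat 1"
    unfolding matrix_inv_def by (rule someI_ex)
  then show "A ** matrix_inv A = mat 1" "matrix_inv A ** A = mat 1" by auto
qed

lemma matrix_inv_entry:
  assumes "invertible (A::real^'n^'n)"
  shows "matrix_inv A $ a $ b = det (\<chi> i j. if j = a then axis b 1 $ i else A$i$j) / det A"
proof -
  have "A *v (matrix_inv A *v axis b 1) = axis b 1"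
    by (simp add: matrix_vector_mul_assoc matrix_inv_mult(1)[OF assms])
  then have "matrix_inv A *v axis b 1
      = (\<chi> k. det (\<chi> i j. if j = k then axis b 1 $ i else A$i$j) / det A)"
    using cramer assms invertible_det_nz by blast
  then have "(matrix_inv A *v axis b 1) $ a
      = det (\<chi> i j. if j = a then axis b 1 $ i else A$i$j) / det A"
    by simp
  then show ?thesis by (simp add: matrix_vector_mult_basis column_def)
qed

lemma matrix_inv_symmetric:
  assumes "invertible (A::real^'n^'n)" "transpose A = A"
  shows "transpose (matrix_inv A) = matrix_inv A"
proof -
  let ?N = "matrix_inv A"
  have "transpose (A ** ?N) = mat 1" using matrix_inv_mult(1)[OF assms(1)] by simp
  then have left: "transpose ?N ** A = mat 1" using assms(2) by (simp add: matrix_transpose_mul)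
  have "transpose ?N = transpose ?N ** (A ** ?N)" by (simp add: matrix_inv_mult(1)[OF assms(1)])
  also have "\<dots> = ?N" by (simp add: matrix_mul_assoc left)
  finally show ?thesis .
qed

lemma bilinear_form_sum:
  "(\<Sum>i\<in>UNIV. \<Sum>j\<in>UNIV. G$i$j * x$i * y$j) = x \<bullet> ((G::real^'i^'i) *v y)"
  by (simp add: inner_vec_def matrix_vector_mult_def sum_distrib_left algebra_simps)

lemma symmetric_form_swap:
  "transpose G = G \<Longrightarrow> x \<bullet> ((G::real^'i^'i) *v y) = y \<bullet> (G *v x)"
  by (metis dot_lmul_matrix inner_commute transpose_matrix_vector)

lemma transpose_eq_if_form_symmetric:
  assumes "\<And>x y. x \<bullet> ((A::real^'n^'n) *v y) = y \<bullet> (A *v x)"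
  shows "transpose A = A"
proof -
  have "A $ i $ j = axis i 1 \<bullet> (A *v axis j 1)" for i j
    by (metis cart_eq_inner_axis column_def inner_commute matrix_vector_mult_basis vec_lambda_beta)
  then show ?thesis by (simp add: vec_eq_iff transpose_def assms)
qed

lemma complete_square:
  assumes "transpose N = N" "N ** M = (mat 1::real^'k^'k)" "transpose M = M"
  shows "P \<bullet> (N *v P) = 2 * (P \<bullet> u) - u \<bullet> (M *v u) + (M *v u - P) \<bullet> (N *v (M *v u - P))"
proof -
  have NM: "N *v (M *v u) = u" by (simp add: matrix_vector_mul_assoc assms(2))
  have "(M *v u) \<bullet> (N *v P) = P \<bullet> u"
    using symmetric_form_swap[OF assms(1), of "M *v u" P] NM by simp
  then show ?thesis
    by (simp add: algebra_simps inner_diff_left inner_diff_right NM inner_commute[of "M *v u" u])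
qed

lemma sum_UNIV_Plus:
  "(\<Sum>i\<in>(UNIV::('k::finite+'n::finite) set). f i) = (\<Sum>a\<in>UNIV. f (Inl a)) + (\<Sum>\<alpha>\<in>UNIV. f (Inr \<alpha>))"
  by (simp add: UNIV_Plus_UNIV[symmetric] sum.Plus del: UNIV_Plus_UNIV)

lemma inner_Plus:
  fixes x y :: "real^('k::finite+'n::finite)"
  shows "x \<bullet> y = (\<Sum>a\<in>UNIV. x$Inl a * y$Inl a) + (\<Sum>\<alpha>\<in>UNIV. x$Inr \<alpha> * y$Inr \<alpha>)"
  by (simp add: inner_vec_def sum_UNIV_Plus)

lemma vec_eq_Plus:
  fixes x y :: "real^('k::finite+'n::finite)"
  shows "x = y \<longleftrightarrow> (\<forall>a. x$Inl a = y$Inl a) \<and> (\<forall>\<alpha>. x$Inr \<alpha> = y$Inr \<alpha>)"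
  by (metis vec_eq_iff old.sum.exhaust)

definition lift :: "(real^('k::finite+'n::finite) \<Rightarrow> 'n \<Rightarrow> 'k \<Rightarrow> real) \<Rightarrow> real^('k+'n)
                    \<Rightarrow> real^'k \<Rightarrow> real^('k+'n)" where
  "lift \<Gamma> q x = (\<chi> i. case i of Inl a \<Rightarrow> x$a | Inr \<alpha> \<Rightarrow> (\<Sum>a\<in>UNIV. \<Gamma> q \<alpha> a * x$a))"

definition free_part :: "real^('k::finite+'n::finite) \<Rightarrow> real^'k" where
  "free_part y = (\<chi> a. y $ Inl a)"

definition Pvec :: "(real^('k::finite+'n::finite) \<Rightarrow> 'n \<Rightarrow> 'k \<Rightarrow> real) \<Rightarrow> real^('k+'n)
                    \<Rightarrow> real^('k+'n) \<Rightarrow> real^'k" where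
  "Pvec \<Gamma> q p = (\<chi> a. Pmom \<Gamma> q p a)"

lemma lift_Inl [simp]: "lift \<Gamma> q x $ Inl a = x $ a"
  by (simp add: lift_def)
lemma lift_Inr [simp]: "lift \<Gamma> q x $ Inr \<alpha> = (\<Sum>a\<in>UNIV. \<Gamma> q \<alpha> a * x$a)"
  by (simp add: lift_def)
lemma free_part_nth [simp]: "free_part y $ a = y $ Inl a"
  by (simp add: free_part_def)
lemma Pvec_nth [simp]: "Pvec \<Gamma> q p $ a = p $ Inl a + (\<Sum>\<alpha>\<in>UNIV. p $ Inr \<alpha> * \<Gamma> q \<alpha> a)"
  by (simp add: Pvec_def Pmom_def)

lemma lift_diff: "lift \<Gamma> q (x - y) = lift \<Gamma> q x - lift \<Gamma> q y"
  by (simp add: vec_eq_Plus right_diff_distrib sum_subtractf)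
lemma lift_scaleR: "lift \<Gamma> q (c *\<^sub>R x) = c *\<^sub>R lift \<Gamma> q x"
  by (simp add: vec_eq_Plus sum_distrib_left algebra_simps)
lemma free_part_lift [simp]: "free_part (lift \<Gamma> q x) = x"
  by (simp add: vec_eq_iff)

lemma Pvec_adjoint: "Pvec \<Gamma> q p \<bullet> x = p \<bullet> lift \<Gamma> q x"
proof -
  have "(\<Sum>a\<in>UNIV. \<Sum>\<alpha>\<in>UNIV. p $ Inr \<alpha> * \<Gamma> q \<alpha> a * x $ a)
      = (\<Sum>\<alpha>\<in>UNIV. \<Sum>a\<in>UNIV. p $ Inr \<alpha> * (\<Gamma> q \<alpha> a * x $ a))"
    by (subst sum.swap) (simp add: mult.assoc)
  then show ?thesis
    by (simp add: inner_Plus inner_vec_def algebra_simps sum.distrib sum_distrib_left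
        sum_distrib_right)
qed

lemma Pvec_bounded_linear: "bounded_linear (Pvec \<Gamma> q)"
proof -
  have "linear (Pvec \<Gamma> q)"
    by (rule linearI) (simp_all add: vec_eq_iff algebra_simps sum.distrib sum_distrib_left)
  then show ?thesis by (simp add: linear_conv_bounded_linear)
qed

lemma constraint_iff_lift:
  "(\<forall>\<alpha>. phid \<Gamma> \<alpha> q0 q1 = 0) \<longleftrightarrow> q1 - q0 = lift \<Gamma> q0 (free_part (q1 - q0))"
  by (auto simp: vec_eq_Plus phid_def)

lemma gammaM_mult:
  assumes "transpose (g q) = g q"
  shows "gammaM g \<Gamma> q *v x = Pvec \<Gamma> q (g q *v lift \<Gamma> q x)"
proof -
  have s: "g q $ i $ j = g q $ j $ i" for i j
    using arg_cong[OF assms, of "\<lambda>A. A$j$i"] by (simp add: transpose_def)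
  have "(gammaM g \<Gamma> q *v x) $ a = Pvec \<Gamma> q (g q *v lift \<Gamma> q x) $ a" for a
  proof -
    have e1: "(\<Sum>j\<in>UNIV. \<Sum>\<alpha>\<in>UNIV. x $ j * (\<Gamma> q \<alpha> a * g q $ Inl j $ Inr \<alpha>)) =
        (\<Sum>\<alpha>\<in>UNIV. \<Sum>j\<in>UNIV. x $ j * (\<Gamma> q \<alpha> a * g q $ Inl j $ Inr \<alpha>))"
      by (rule sum.swap)
    have e2: "(\<Sum>j\<in>UNIV. \<Sum>\<alpha>\<in>UNIV. x $ j * (\<Gamma> q \<alpha> j * g q $ Inl a $ Inr \<alpha>)) =
        (\<Sum>\<alpha>\<in>UNIV. \<Sum>j\<in>UNIV. x $ j * (\<Gamma> q \<alpha> j * g q $ Inl a $ Inr \<alpha>))"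
      by (rule sum.swap)
    have e3: "(\<Sum>j\<in>UNIV. \<Sum>\<alpha>\<in>UNIV. \<Sum>\<beta>\<in>UNIV. x $ j * (\<Gamma> q \<alpha> a * (\<Gamma> q \<beta> j * g q $ Inr \<alpha> $ Inr \<beta>))) =
        (\<Sum>\<alpha>\<in>UNIV. \<Sum>\<beta>\<in>UNIV. \<Sum>j\<in>UNIV. x $ j * (\<Gamma> q \<alpha> a * (\<Gamma> q \<beta> j * g q $ Inr \<alpha> $ Inr \<beta>)))"
      by (rule trans[OF sum.swap], rule sum.cong[OF refl], rule sum.swap)
    show ?thesis
      by (simp add: gammaM_def matrix_vector_mult_def sum_UNIV_Plus sum_distrib_left
          sum_distrib_right sum.distrib algebra_simps s e1 e2 e3)
  qed
  then show ?thesis by (simp add: vec_eq_iff)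
qed

lemma gammaM_form:
  assumes "transpose (g q) = g q"
  shows "x \<bullet> (gammaM g \<Gamma> q *v y) = lift \<Gamma> q x \<bullet> (g q *v lift \<Gamma> q y)"
  by (metis gammaM_mult[where g=g and q=q, OF assms] inner_commute Pvec_adjoint)

lemma gammaM_symmetric:
  assumes "transpose (g q) = g q"
  shows "transpose (gammaM g \<Gamma> q) = gammaM g \<Gamma> q"
  by (rule transpose_eq_if_form_symmetric)
     (simp add: gammaM_form[where g=g and q=q, OF assms] symmetric_form_swap[OF assms])

text \<open>Since the lift is injective, \<gamma> inherits positive definiteness from g; in particular
  \<gamma> is invertible (this is where the Riemannian hypothesis is used).\<close>
lemma gammaM_invertible:
  assumes "transpose (g q) = g q" "\<And>v. v \<noteq> 0 \<Longrightarrow> v \<bullet> (g q *v v) > 0"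
  shows "invertible (gammaM g \<Gamma> q)"
proof -
  have "x = 0" if "gammaM g \<Gamma> q *v x = 0" for x
  proof (rule ccontr)
    assume "x \<noteq> 0"
    then have "lift \<Gamma> q x \<noteq> 0" by (metis lift_Inl vec_eq_iff zero_index)
    then have "lift \<Gamma> q x \<bullet> (g q *v lift \<Gamma> q x) > 0" using assms(2) by blast
    then show False using that gammaM_form[where g=g and q=q and \<Gamma>=\<Gamma> and x=x and y=x, OF assms(1)] by simp
  qed
  then show ?thesis
    using invertible_left_inverse matrix_left_invertible_ker by blast
qed

definition mult_vec :: "('n::finite \<Rightarrow> real) \<Rightarrow> real^('k::finite+'n)" where
  "mult_vec lam = (\<chi> i. case i of Inl a \<Rightarrow> 0 | Inr \<alpha> \<Rightarrow> lam \<alpha>)"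

lemma mult_vec_Inl [simp]: "mult_vec lam $ Inl a = 0"
  by (simp add: mult_vec_def)
lemma mult_vec_Inr [simp]: "mult_vec lam $ Inr \<alpha> = lam \<alpha>"
  by (simp add: mult_vec_def)

lemma LLd_inner:
  "LLd h g V q q1 = (1/(2*h)) * ((q1 - q) \<bullet> (g q *v (q1 - q))) - h * V q"
  unfolding LLd_def bilinear_form_sum[symmetric] by simp

lemma constraint_sum_inner:
  "(\<Sum>\<alpha>\<in>UNIV. lam \<alpha> * phid \<Gamma> \<alpha> q q1)
     = mult_vec lam \<bullet> ((q1 - q) - lift \<Gamma> q (free_part (q1 - q)))"
  by (simp add: inner_Plus phid_def)

lemma Ham_inner:
  "Ham g V \<Gamma> q p = (1/2) * (Pvec \<Gamma> q p \<bullet> (matrix_inv (gammaM g \<Gamma> q) *v Pvec \<Gamma> q p)) + V q"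
  unfolding Ham_def bilinear_form_sum[symmetric] by (simp del: Pvec_nth add: Pvec_def)

locale constrained_system =
  fixes U :: "(real^('k::finite + 'n::finite)) set"
    and g :: "real^('k + 'n) \<Rightarrow> real^('k + 'n)^('k + 'n)"
    and V :: "real^('k + 'n) \<Rightarrow> real"
    and \<Gamma> :: "real^('k + 'n) \<Rightarrow> 'n \<Rightarrow> 'k \<Rightarrow> real"
    and h :: real
  assumes open_U: "open U"
    and metric: "riemannian_metric U g"
    and smooth_V: "smooth_on U V"
    and smooth_\<Gamma>: "\<And>\<alpha> a. smooth_on U (\<lambda>q. \<Gamma> q \<alpha> a)"
    and h_pos: "h > 0"
begin

lemma g_symmetric: "q \<in> U \<Longrightarrow> transpose (g q) = g q"
  using metric unfolding riemannian_metric_def by blast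

lemma gamma_invertible: "q \<in> U \<Longrightarrow> invertible (gammaM g \<Gamma> q)"
  using metric unfolding riemannian_metric_def by (intro gammaM_invertible) auto

lemma gamma_symmetric: "q \<in> U \<Longrightarrow> transpose (gammaM g \<Gamma> q) = gammaM g \<Gamma> q"
  using gammaM_symmetric[where g=g and q=q] g_symmetric by blast

lemma gamma_inv_symmetric:
  "q \<in> U \<Longrightarrow> transpose (matrix_inv (gammaM g \<Gamma> q)) = matrix_inv (gammaM g \<Gamma> q)"
  by (rule matrix_inv_symmetric[OF gamma_invertible gamma_symmetric])

lemma gamma_mult: "q \<in> U \<Longrightarrow> gammaM g \<Gamma> q *v x = Pvec \<Gamma> q (g q *v lift \<Gamma> q x)"
  using gammaM_mult[where g=g and q=q] g_symmetric by blast

lemma gamma_form: "q \<in> U \<Longrightarrow> x \<bullet> (gammaM g \<Gamma> q *v y) = lift \<Gamma> q x \<bullet> (g q *v lift \<Gamma> q y)"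
  using gammaM_form[where g=g and q=q] g_symmetric by blast

end

locale constrained_system_at = constrained_system +
  fixes q0 :: "real^('k::finite + 'n::finite)"
  assumes q0_in_U: "q0 \<in> U"
begin

lemma differentiable_g [derivative_intros]: "(\<lambda>q. g q $ i $ j) differentiable (at q0)"
  using metric open_U q0_in_U smooth_on_differentiable unfolding riemannian_metric_def by blast

lemma differentiable_V [derivative_intros]: "V differentiable (at q0)"
  using smooth_V open_U q0_in_U smooth_on_differentiable by blast

lemma differentiable_\<Gamma> [derivative_intros]: "(\<lambda>q. \<Gamma> q \<alpha> a) differentiable (at q0)"
  using smooth_\<Gamma> open_U q0_in_U smooth_on_differentiable by blast

lemma differentiable_lift [derivative_intros]: "(\<lambda>q. lift \<Gamma> q x $ j) differentiable (at q0)"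
  by (cases j) (auto intro!: derivative_intros)

lemma differentiable_gamma [derivative_intros]:
  "(\<lambda>q. gammaM g \<Gamma> q $ a $ b) differentiable (at q0)"
  unfolding gammaM_def by (auto intro!: derivative_intros)

text \<open>By Cramer's rule the entries of \<gamma>^{-1} are quotients of determinants, with nonvanishing
  denominator on the open set U.\<close>
lemma differentiable_gamma_inv [derivative_intros]:
  "(\<lambda>q. matrix_inv (gammaM g \<Gamma> q) $ a $ b) differentiable (at q0)"
proof -
  let ?B = "\<lambda>q. \<chi> i j. if j = a then axis b 1 $ i else gammaM g \<Gamma> q $ i $ j"
  have "(\<lambda>q. ?B q $ i $ j) differentiable (at q0)" for i j
    by (cases "j = a") (auto intro!: derivative_intros)
  moreover have "det (gammaM g \<Gamma> q0) \<noteq> 0"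
    using gamma_invertible[OF q0_in_U] invertible_det_nz by blast
  ultimately have "(\<lambda>q. det (?B q) / det (gammaM g \<Gamma> q)) differentiable (at q0)"
    by (intro differentiable_divide det_differentiable differentiable_gamma)
  then show ?thesis
    by (rule differentiable_transform_open[OF _ open_U q0_in_U])
       (simp add: matrix_inv_entry[OF gamma_invertible])
qed

lemma differentiable_LLd: "(\<lambda>q. LLd h g V q q1) differentiable (at q0)"
  unfolding LLd_def using h_pos by (auto intro!: derivative_intros)

lemma differentiable_phid: "(\<lambda>q. phid \<Gamma> \<alpha> q q1) differentiable (at q0)"
  unfolding phid_def by (auto intro!: derivative_intros)

lemma differentiable_Ham: "(\<lambda>q. Ham g V \<Gamma> q p) differentiable (at q0)"
  unfolding Ham_def Pmom_def by (auto intro!: derivative_intros)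

definition momentum0 :: "real^('k+'n) \<Rightarrow> ('n \<Rightarrow> real) \<Rightarrow> real^('k+'n)" where
  "momentum0 q1 lam = d0 (LLd h g V) q0 q1 + (\<Sum>\<alpha>\<in>UNIV. lam \<alpha> *\<^sub>R d0 (phid \<Gamma> \<alpha>) q0 q1)"

definition momentum1 :: "real^('k+'n) \<Rightarrow> ('n \<Rightarrow> real) \<Rightarrow> real^('k+'n)" where
  "momentum1 q1 lam = d1 (LLd h g V) q0 q1 + (\<Sum>\<alpha>\<in>UNIV. lam \<alpha> *\<^sub>R d1 (phid \<Gamma> \<alpha>) q0 q1)"

lemma SigmaLd_member_iff:
  assumes "q1 \<in> U"
  shows "((q0, q1), (\<mu>0, \<mu>1)) \<in> SigmaLd U h g V \<Gamma> \<longleftrightarrow>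
    q1 - q0 = lift \<Gamma> q0 (free_part (q1 - q0)) \<and>
    (\<exists>lam. \<mu>0 = momentum0 q1 lam \<and> \<mu>1 = momentum1 q1 lam)"
  using q0_in_U assms
  by (simp add: SigmaLd_def Cd_def constraint_iff_lift momentum0_def momentum1_def)

lemma d1_LLd: "d1 (LLd h g V) q0 q1 = (1/h) *\<^sub>R (g q0 *v (q1 - q0))"
proof -
  have "((\<lambda>q. (1/(2*h)) * ((q - q0) \<bullet> (g q0 *v (q - q0))) - h * V q0) has_derivative
      (\<lambda>v. (1/(2*h)) * ((q1 - q0) \<bullet> (g q0 *v v) + v \<bullet> (g q0 *v (q1 - q0))) - 0)) (at q1)"
    by (intro has_derivative_diff has_derivative_mult_right has_derivative_inner
        has_derivative_matrix_shift has_derivative_const)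
       (rule has_derivative_matrix_shift[of "mat 1", simplified])
  moreover have "(\<lambda>v. (1/(2*h)) * ((q1 - q0) \<bullet> (g q0 *v v) + v \<bullet> (g q0 *v (q1 - q0))) - 0)
      = (\<lambda>v. ((1/h) *\<^sub>R (g q0 *v (q1 - q0))) \<bullet> v)"
    using symmetric_form_swap[OF g_symmetric[OF q0_in_U]] h_pos
    by (auto simp: inner_commute field_simps)
  ultimately show ?thesis unfolding d1_def LLd_inner by (simp add: grad_inner)
qed

lemma d1_phid:
  "d1 (phid \<Gamma> \<alpha>) q0 q1 = (\<chi> i. case i of Inl a \<Rightarrow> - \<Gamma> q0 \<alpha> a | Inr \<beta> \<Rightarrow> (if \<beta> = \<alpha> then 1 else 0))"
proof -
  have "((\<lambda>q. phid \<Gamma> \<alpha> q0 q) has_derivative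
      (\<lambda>v. v $ Inr \<alpha> - 0 - (\<Sum>a\<in>UNIV. \<Gamma> q0 \<alpha> a * (v $ Inl a - 0)))) (at q1)"
    unfolding phid_def by (intro derivative_intros)
  then show ?thesis
    by (simp add: d1_def grad_eq vec_eq_Plus axis_def if_distrib sum.If_cases cong: if_cong)
qed

lemma momentum1_iff:
  "p1 = momentum1 q1 lam \<longleftrightarrow>
     (\<forall>\<alpha>. lam \<alpha> = p1 $ Inr \<alpha> - (1/h) * (g q0 *v (q1 - q0)) $ Inr \<alpha>) \<and>
     Pvec \<Gamma> q0 p1 = (1/h) *\<^sub>R Pvec \<Gamma> q0 (g q0 *v (q1 - q0))"
proof -
  define w where "w = (1/h) *\<^sub>R (g q0 *v (q1 - q0))"
  define c where "c = (\<Sum>\<alpha>\<in>UNIV. lam \<alpha> *\<^sub>R d1 (phid \<Gamma> \<alpha>) q0 q1)"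
  have comb_Inl: "c $ Inl a = - (\<Sum>\<alpha>\<in>UNIV. lam \<alpha> * \<Gamma> q0 \<alpha> a)" for a
    by (simp add: c_def d1_phid sum_component sum_negf)
  have comb_Inr: "c $ Inr \<beta> = lam \<beta>" for \<beta>
    by (simp add: c_def d1_phid sum_component if_distrib cong: if_cong)
  have "p1 = w + c \<longleftrightarrow>
      (\<forall>\<alpha>. lam \<alpha> = p1 $ Inr \<alpha> - w $ Inr \<alpha>) \<and> Pvec \<Gamma> q0 p1 = Pvec \<Gamma> q0 w"
  proof -
    have multipliers: "(\<Sum>\<alpha>\<in>UNIV. lam \<alpha> * \<Gamma> q0 \<alpha> a)
        = (\<Sum>\<alpha>\<in>UNIV. p1 $ Inr \<alpha> * \<Gamma> q0 \<alpha> a) - (\<Sum>\<alpha>\<in>UNIV. w $ Inr \<alpha> * \<Gamma> q0 \<alpha> a)"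
      if "\<forall>\<alpha>. lam \<alpha> = p1 $ Inr \<alpha> - w $ Inr \<alpha>" for a
      using that by (simp add: left_diff_distrib sum_subtractf)
    show ?thesis
      by (auto simp: vec_eq_Plus[of p1] vec_eq_iff[of "Pvec \<Gamma> q0 p1"] comb_Inl comb_Inr
          multipliers algebra_simps)
  qed
  moreover have "Pvec \<Gamma> q0 w = (1/h) *\<^sub>R Pvec \<Gamma> q0 (g q0 *v (q1 - q0))"
    unfolding w_def using linear_scale[OF bounded_linear.linear[OF Pvec_bounded_linear]] by blast
  ultimately show ?thesis by (simp add: momentum1_def d1_LLd w_def c_def)
qed

lemma grad_p_Ham:
  "grad (\<lambda>p. Ham g V \<Gamma> q0 p) p1 = lift \<Gamma> q0 (matrix_inv (gammaM g \<Gamma> q0) *v Pvec \<Gamma> q0 p1)"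
proof -
  define N where "N = matrix_inv (gammaM g \<Gamma> q0)"
  have N_sym: "transpose N = N" using gamma_inv_symmetric[OF q0_in_U] N_def by simp
  have hP: "(Pvec \<Gamma> q0 has_derivative Pvec \<Gamma> q0) F" for F
    by (rule bounded_linear_imp_has_derivative[OF Pvec_bounded_linear])
  have hNP: "((\<lambda>p. N *v Pvec \<Gamma> q0 p) has_derivative (\<lambda>v. N *v Pvec \<Gamma> q0 v)) F" for F
    by (rule bounded_linear.has_derivative[OF matrix_vector_mul_bounded_linear hP])
  have "((\<lambda>p. (1/2) * (Pvec \<Gamma> q0 p \<bullet> (N *v Pvec \<Gamma> q0 p)) + V q0) has_derivative
     (\<lambda>v. (1/2) * (Pvec \<Gamma> q0 p1 \<bullet> (N *v Pvec \<Gamma> q0 v) + Pvec \<Gamma> q0 v \<bullet> (N *v Pvec \<Gamma> q0 p1)) + 0))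
     (at p1)"
    by (intro has_derivative_add has_derivative_mult_right has_derivative_inner hP hNP
        has_derivative_const)
  moreover have "(\<lambda>v. (1/2) * (Pvec \<Gamma> q0 p1 \<bullet> (N *v Pvec \<Gamma> q0 v)
        + Pvec \<Gamma> q0 v \<bullet> (N *v Pvec \<Gamma> q0 p1)) + 0)
      = (\<lambda>v. lift \<Gamma> q0 (N *v Pvec \<Gamma> q0 p1) \<bullet> v)"
    using symmetric_form_swap[OF N_sym] by (auto simp: Pvec_adjoint inner_commute)
  ultimately show ?thesis unfolding Ham_inner N_def[symmetric] by (simp add: grad_inner)
qed

lemma gamma_free_velocity:
  assumes "q1 - q0 = lift \<Gamma> q0 (free_part (q1 - q0))"
  shows "gammaM g \<Gamma> q0 *v free_part (q1 - q0) = Pvec \<Gamma> q0 (g q0 *v (q1 - q0))"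
  using gamma_mult[OF q0_in_U, of "free_part (q1 - q0)"] assms by simp

lemma position_update_iff:
  "q1 = q0 + h *\<^sub>R grad (\<lambda>p. Ham g V \<Gamma> q0 p) p1 \<longleftrightarrow>
     q1 - q0 = lift \<Gamma> q0 (free_part (q1 - q0)) \<and>
     Pvec \<Gamma> q0 p1 = (1/h) *\<^sub>R (gammaM g \<Gamma> q0 *v free_part (q1 - q0))"
proof -
  let ?M = "gammaM g \<Gamma> q0" and ?P = "Pvec \<Gamma> q0 p1"
  have MN: "?M *v (matrix_inv ?M *v x) = x" "matrix_inv ?M *v (?M *v x) = x" for x
    using matrix_inv_mult[OF gamma_invertible[OF q0_in_U]] by (simp_all add: matrix_vector_mul_assoc)
  have "q1 = q0 + h *\<^sub>R grad (\<lambda>p. Ham g V \<Gamma> q0 p) p1 \<longleftrightarrow>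
      q1 - q0 = lift \<Gamma> q0 (h *\<^sub>R (matrix_inv ?M *v ?P))"
    by (auto simp: grad_p_Ham lift_scaleR algebra_simps)
  also have "\<dots> \<longleftrightarrow> q1 - q0 = lift \<Gamma> q0 (free_part (q1 - q0)) \<and>
      free_part (q1 - q0) = h *\<^sub>R (matrix_inv ?M *v ?P)"
    by auto
  also have "\<dots> \<longleftrightarrow> q1 - q0 = lift \<Gamma> q0 (free_part (q1 - q0)) \<and>
      ?P = (1/h) *\<^sub>R (?M *v free_part (q1 - q0))"
    using h_pos MN by (auto simp: matrix_vector_mult_scaleR)
  finally show ?thesis .
qed

text \<open>For a candidate (q1, p1, \<lambda>), the generating function of the scheme as a function of the
  base point.  The momentum equation says precisely that q0 is a critical point of it.\<close>
definition gen_fun :: "real^('k+'n) \<Rightarrow> real^('k+'n) \<Rightarrow> ('n \<Rightarrow> real) \<Rightarrow> real^('k+'n) \<Rightarrow> real" where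
  "gen_fun q1 p1 lam q =
     LLd h g V q q1 + (\<Sum>\<alpha>\<in>UNIV. lam \<alpha> * phid \<Gamma> \<alpha> q q1) + p1 \<bullet> q + h * Ham g V \<Gamma> q p1"

text \<open>The three quantities that vanish at q0 under (R1)-(R3): the failure of the constraint
  for the fixed free velocity (q1 - q0)_k, its cofactor in gen_fun (only its constrained
  components vanish), and the failure of the reduced Legendre relation.\<close>
definition constraint_defect :: "real^('k+'n) \<Rightarrow> real^('k+'n) \<Rightarrow> real^('k+'n)" where
  "constraint_defect q1 q = (q1 - q) - lift \<Gamma> q (free_part (q1 - q0))"

definition defect_cofactor ::
  "real^('k+'n) \<Rightarrow> real^('k+'n) \<Rightarrow> ('n \<Rightarrow> real) \<Rightarrow> real^('k+'n) \<Rightarrow> real^('k+'n)" where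
  "defect_cofactor q1 p1 lam q =
     (1/(2*h)) *\<^sub>R (g q *v ((q1 - q) + lift \<Gamma> q (free_part (q1 - q0)))) - p1 + mult_vec lam"

definition momentum_residual :: "real^('k+'n) \<Rightarrow> real^('k+'n) \<Rightarrow> real^('k+'n) \<Rightarrow> real^'k" where
  "momentum_residual q1 p1 q = gammaM g \<Gamma> q *v ((1/h) *\<^sub>R free_part (q1 - q0)) - Pvec \<Gamma> q p1"

definition remainder :: "real^('k+'n) \<Rightarrow> real^('k+'n) \<Rightarrow> ('n \<Rightarrow> real) \<Rightarrow> real^('k+'n) \<Rightarrow> real" where
  "remainder q1 p1 lam q =
     constraint_defect q1 q \<bullet> defect_cofactor q1 p1 lam q
     + mult_vec lam \<bullet> lift \<Gamma> q (free_part (q - q0))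
     + (h/2) * (momentum_residual q1 p1 q \<bullet>
                (matrix_inv (gammaM g \<Gamma> q) *v momentum_residual q1 p1 q))"

text \<open>Algebraic heart of the proof: on U, gen_fun differs from the remainder by a constant.
  The Hamiltonian term is expanded by completing the square with u = (q1 - q0)_k / h.\<close>
lemma gen_fun_decomposition:
  assumes qU: "q \<in> U"
  shows "gen_fun q1 p1 lam q = p1 \<bullet> q1 + remainder q1 p1 lam q"
proof -
  define Dl where "Dl = free_part (q1 - q0)"
  define y where "y = q1 - q"
  define z where "z = lift \<Gamma> q Dl"
  define w where "w = lift \<Gamma> q (free_part (q - q0))"
  define G where "G = g q"
  define M where "M = gammaM g \<Gamma> q"
  define N where "N = matrix_inv M"
  define P where "P = Pvec \<Gamma> q p1"
  define u where "u = (1/h) *\<^sub>R Dl"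
  have G_sym: "transpose G = G" using g_symmetric[OF qU] G_def by simp
  have kinetic: "LLd h g V q q1 = (1/(2*h)) * (y \<bullet> (G *v y)) - h * V q"
    by (simp add: LLd_inner y_def G_def)
  have free_velocity: "free_part (q1 - q) = Dl - free_part (q - q0)"
    by (simp add: Dl_def vec_eq_iff)
  have constraint: "(\<Sum>\<alpha>\<in>UNIV. lam \<alpha> * phid \<Gamma> \<alpha> q q1) = mult_vec lam \<bullet> (y - z + w)"
    unfolding constraint_sum_inner free_velocity lift_diff y_def z_def w_def
    by (simp add: algebra_simps)
  have hamiltonian: "Ham g V \<Gamma> q p1 = (1/2) * (P \<bullet> (N *v P)) + V q"
    by (simp add: Ham_inner P_def N_def M_def)
  have square: "P \<bullet> (N *v P) = 2 * (P \<bullet> u) - u \<bullet> (M *v u) + (M *v u - P) \<bullet> (N *v (M *v u - P))"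
    by (rule complete_square) (simp_all add: N_def M_def gamma_inv_symmetric[OF qU]
        matrix_inv_mult(2)[OF gamma_invertible[OF qU]] gamma_symmetric[OF qU])
  have linear_part: "P \<bullet> u = (1/h) * (p1 \<bullet> z)"
    by (simp add: P_def Pvec_adjoint u_def lift_scaleR z_def)
  have quadratic_part: "u \<bullet> (M *v u) = (1/h) * (1/h) * (z \<bullet> (G *v z))"
    by (simp add: M_def gamma_form[OF qU] u_def lift_scaleR z_def G_def matrix_vector_mult_scaleR)
  have "(y - z) \<bullet> ((1/(2*h)) *\<^sub>R (G *v (y + z)) - p1 + mult_vec lam)
     = (1/(2*h)) * (y \<bullet> (G *v y) - z \<bullet> (G *v z)) - p1 \<bullet> y + p1 \<bullet> z + mult_vec lam \<bullet> (y - z)"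
    using symmetric_form_swap[OF G_sym, of z y]
    by (simp add: algebra_simps inner_diff_left inner_diff_right inner_add_right inner_commute)
  moreover have "p1 \<bullet> y = p1 \<bullet> q1 - p1 \<bullet> q" by (simp add: y_def inner_diff_right)
  ultimately show ?thesis
    unfolding gen_fun_def remainder_def constraint_defect_def defect_cofactor_def momentum_residual_def
      Dl_def[symmetric] y_def[symmetric] z_def[symmetric] w_def[symmetric] G_def[symmetric]
      M_def[symmetric] N_def[symmetric] P_def[symmetric] u_def[symmetric]
      kinetic constraint hamiltonian square linear_part quadratic_part
    using h_pos by (simp add: algebra_simps inner_add_right inner_diff_right)
qed

lemma constraint_defect_Inl [simp]: "constraint_defect q1 q $ Inl a = q0 $ Inl a - q $ Inl a"
  by (simp add: constraint_defect_def)

lemma differentiable_constraint_defect [derivative_intros]: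
  "(\<lambda>q. constraint_defect q1 q $ i) differentiable (at q0)"
  unfolding constraint_defect_def by (auto intro!: derivative_intros)

lemma differentiable_defect_cofactor [derivative_intros]:
  "(\<lambda>q. defect_cofactor q1 p1 lam q $ i) differentiable (at q0)"
  unfolding defect_cofactor_def using h_pos
  by (simp add: matrix_vector_mult_def) (auto intro!: derivative_intros)

lemma differentiable_momentum_residual [derivative_intros]:
  "(\<lambda>q. momentum_residual q1 p1 q $ a) differentiable (at q0)"
  unfolding momentum_residual_def using h_pos
  by (simp add: matrix_vector_mult_def Pvec_def Pmom_def) (auto intro!: derivative_intros)

lemma defect_cofactor_at_base:
  assumes R1: "q1 - q0 = lift \<Gamma> q0 (free_part (q1 - q0))"
    and R2: "Pvec \<Gamma> q0 p1 = (1/h) *\<^sub>R (gammaM g \<Gamma> q0 *v free_part (q1 - q0))"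
    and R3: "\<forall>\<alpha>. lam \<alpha> = p1 $ Inr \<alpha> - (1/h) * (g q0 *v (q1 - q0)) $ Inr \<alpha>"
  shows "defect_cofactor q1 p1 lam q0 $ Inr \<alpha> = 0"
    and "defect_cofactor q1 p1 lam q0 $ Inl a = (\<Sum>\<alpha>\<in>UNIV. lam \<alpha> * \<Gamma> q0 \<alpha> a)"
proof -
  define gd where "gd = g q0 *v (q1 - q0)"
  have "(q1 - q0) + lift \<Gamma> q0 (free_part (q1 - q0)) = 2 *\<^sub>R (q1 - q0)"
    using R1 by (simp add: scaleR_2)
  then have base: "defect_cofactor q1 p1 lam q0 = (1/h) *\<^sub>R gd - p1 + mult_vec lam"
    using h_pos by (simp add: defect_cofactor_def gd_def matrix_vector_mult_scaleR)
  then show "defect_cofactor q1 p1 lam q0 $ Inr \<alpha> = 0"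
    using R3 by (simp add: gd_def)
  have "Pvec \<Gamma> q0 p1 $ a = (1/h) * Pvec \<Gamma> q0 gd $ a"
    using R2 gamma_free_velocity[OF R1] by (simp add: gd_def)
  then have "p1 $ Inl a - (1/h) * gd $ Inl a
      = (\<Sum>\<alpha>\<in>UNIV. (1/h) * gd $ Inr \<alpha> * \<Gamma> q0 \<alpha> a) - (\<Sum>\<alpha>\<in>UNIV. p1 $ Inr \<alpha> * \<Gamma> q0 \<alpha> a)"
    by (simp add: distrib_left sum_distrib_left mult.assoc)
  also have "\<dots> = - (\<Sum>\<alpha>\<in>UNIV. lam \<alpha> * \<Gamma> q0 \<alpha> a)"
    using R3 by (simp add: gd_def left_diff_distrib sum_subtractf)
  finally show "defect_cofactor q1 p1 lam q0 $ Inl a = (\<Sum>\<alpha>\<in>UNIV. lam \<alpha> * \<Gamma> q0 \<alpha> a)"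
    using base by simp
qed

text \<open>Derivatives at q0 of the three parts of the remainder.  The defect vanishes at q0 by (R1);
  its free components are q0_a - q_a, its constrained ones pair with vanishing cofactors.\<close>
lemma defect_term_derivative:
  assumes R1: "q1 - q0 = lift \<Gamma> q0 (free_part (q1 - q0))"
    and cofactor_Inr: "\<And>\<alpha>. defect_cofactor q1 p1 lam q0 $ Inr \<alpha> = 0"
  shows "((\<lambda>q. constraint_defect q1 q \<bullet> defect_cofactor q1 p1 lam q) has_derivative
          (\<lambda>v. \<Sum>a\<in>UNIV. - v $ Inl a * defect_cofactor q1 p1 lam q0 $ Inl a)) (at q0)"
proof -
  have "((\<lambda>q. constraint_defect q1 q $ Inl a) has_derivative (\<lambda>v. - v $ Inl a)) (at q0)" for a
    using has_derivative_diff[OF has_derivative_const has_derivative_nth, of "q0 $ Inl a" "Inl a"]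
    by simp
  moreover have "constraint_defect q1 q0 = 0"
    using R1 by (simp add: constraint_defect_def)
  ultimately have
    "((\<lambda>q. (\<Sum>a\<in>UNIV. constraint_defect q1 q $ Inl a * defect_cofactor q1 p1 lam q $ Inl a)
        + (\<Sum>\<alpha>\<in>UNIV. constraint_defect q1 q $ Inr \<alpha> * defect_cofactor q1 p1 lam q $ Inr \<alpha>))
      has_derivative (\<lambda>v. (\<Sum>a\<in>UNIV. - v $ Inl a * defect_cofactor q1 p1 lam q0 $ Inl a)
        + (\<Sum>\<alpha>\<in>(UNIV::'n set). 0))) (at q0)"
    by (intro has_derivative_add has_derivative_sum has_derivative_mult_vanishing
        has_derivative_mult_flat derivative_intros) (simp_all add: cofactor_Inr)
  then show ?thesis by (simp add: inner_Plus)
qed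

text \<open>The multiplier term is linear in q - q0 up to the factor \<Gamma>(q).\<close>
lemma multiplier_term_derivative:
  "((\<lambda>q. mult_vec lam \<bullet> lift \<Gamma> q (free_part (q - q0))) has_derivative
     (\<lambda>v. \<Sum>\<alpha>\<in>UNIV. lam \<alpha> * (\<Sum>a\<in>UNIV. v $ Inl a * \<Gamma> q0 \<alpha> a))) (at q0)"
proof -
  have "((\<lambda>q. q $ Inl a - q0 $ Inl a) has_derivative (\<lambda>v. v $ Inl a - 0)) (at q0)" for a
    by (intro derivative_intros)
  then have "((\<lambda>q. \<Sum>\<alpha>\<in>UNIV. lam \<alpha> * (\<Sum>a\<in>UNIV. (q $ Inl a - q0 $ Inl a) * \<Gamma> q \<alpha> a))
      has_derivative (\<lambda>v. \<Sum>\<alpha>\<in>UNIV. lam \<alpha> * (\<Sum>a\<in>UNIV. v $ Inl a * \<Gamma> q0 \<alpha> a))) (at q0)"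
    by (intro has_derivative_sum has_derivative_mult_right has_derivative_mult_vanishing
        differentiable_\<Gamma>) simp_all
  then show ?thesis by (simp add: inner_Plus mult.commute)
qed

text \<open>The residual of the Legendre relation vanishes at q0 by (R2), so its square is flat.\<close>
lemma residual_term_flat:
  assumes R2: "Pvec \<Gamma> q0 p1 = (1/h) *\<^sub>R (gammaM g \<Gamma> q0 *v free_part (q1 - q0))"
  shows "((\<lambda>q. (h/2) * (momentum_residual q1 p1 q \<bullet>
            (matrix_inv (gammaM g \<Gamma> q) *v momentum_residual q1 p1 q))) has_derivative (\<lambda>v. 0)) (at q0)"
proof -
  have residual_zero: "momentum_residual q1 p1 q0 = 0"
    by (simp add: momentum_residual_def R2 matrix_vector_mult_scaleR)
  have "(\<lambda>q. (matrix_inv (gammaM g \<Gamma> q) *v momentum_residual q1 p1 q) $ a) differentiable (at q0)" for a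
    by (simp add: matrix_vector_mult_def) (auto intro!: derivative_intros)
  then have "((\<lambda>q. (h/2) * (\<Sum>a\<in>UNIV. momentum_residual q1 p1 q $ a *
      (matrix_inv (gammaM g \<Gamma> q) *v momentum_residual q1 p1 q) $ a))
      has_derivative (\<lambda>v. (h/2) * (\<Sum>a\<in>(UNIV::'k set). 0))) (at q0)"
    by (intro has_derivative_sum has_derivative_mult_right has_derivative_mult_flat
        differentiable_momentum_residual) (simp_all add: residual_zero)
  then show ?thesis by (simp add: inner_vec_def)
qed

text \<open>Under (R1)-(R3) the remainder, hence gen_fun, is critical at q0: the first-order terms of
  the defect and multiplier parts cancel by the value of the cofactor at q0.\<close>
lemma remainder_critical:
  assumes R1: "q1 - q0 = lift \<Gamma> q0 (free_part (q1 - q0))"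
    and R2: "Pvec \<Gamma> q0 p1 = (1/h) *\<^sub>R (gammaM g \<Gamma> q0 *v free_part (q1 - q0))"
    and R3: "\<forall>\<alpha>. lam \<alpha> = p1 $ Inr \<alpha> - (1/h) * (g q0 *v (q1 - q0)) $ Inr \<alpha>"
  shows "(remainder q1 p1 lam has_derivative (\<lambda>v. 0)) (at q0)"
proof -
  note cofactor = defect_cofactor_at_base[OF R1 R2 R3]
  have derivative: "(remainder q1 p1 lam has_derivative
      (\<lambda>v. (\<Sum>a\<in>UNIV. - v $ Inl a * defect_cofactor q1 p1 lam q0 $ Inl a)
        + (\<Sum>\<alpha>\<in>UNIV. lam \<alpha> * (\<Sum>a\<in>UNIV. v $ Inl a * \<Gamma> q0 \<alpha> a)) + 0)) (at q0)"
    unfolding remainder_def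
    by (intro has_derivative_add defect_term_derivative[OF R1 cofactor(1)]
        multiplier_term_derivative residual_term_flat[OF R2])
  have cancel: "(\<Sum>a\<in>UNIV. - v $ Inl a * defect_cofactor q1 p1 lam q0 $ Inl a)
      + (\<Sum>\<alpha>\<in>UNIV. lam \<alpha> * (\<Sum>a\<in>UNIV. v $ Inl a * \<Gamma> q0 \<alpha> a)) = 0" for v
    by (simp add: cofactor(2) sum_distrib_left sum_negf algebra_simps)
       (subst sum.swap, simp add: algebra_simps)
  show ?thesis using derivative unfolding cancel add_0_right .
qed

lemma gen_fun_critical:
  assumes R1: "q1 - q0 = lift \<Gamma> q0 (free_part (q1 - q0))"
    and R2: "Pvec \<Gamma> q0 p1 = (1/h) *\<^sub>R (gammaM g \<Gamma> q0 *v free_part (q1 - q0))"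
    and R3: "\<forall>\<alpha>. lam \<alpha> = p1 $ Inr \<alpha> - (1/h) * (g q0 *v (q1 - q0)) $ Inr \<alpha>"
  shows "(gen_fun q1 p1 lam has_derivative (\<lambda>v. 0)) (at q0)"
proof -
  have "((\<lambda>q. p1 \<bullet> q1 + remainder q1 p1 lam q) has_derivative (\<lambda>v. 0 + 0)) (at q0)"
    by (intro has_derivative_add has_derivative_const remainder_critical[OF R1 R2 R3])
  then have "((\<lambda>q. p1 \<bullet> q1 + remainder q1 p1 lam q) has_derivative (\<lambda>v. 0)) (at q0)"
    by simp
  then show ?thesis
    by (rule has_derivative_transform_within_open[OF _ open_U q0_in_U])
       (simp add: gen_fun_decomposition)
qed

lemma momentum_identity:
  assumes R1: "q1 - q0 = lift \<Gamma> q0 (free_part (q1 - q0))"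
    and R2: "Pvec \<Gamma> q0 p1 = (1/h) *\<^sub>R (gammaM g \<Gamma> q0 *v free_part (q1 - q0))"
    and R3: "\<forall>\<alpha>. lam \<alpha> = p1 $ Inr \<alpha> - (1/h) * (g q0 *v (q1 - q0)) $ Inr \<alpha>"
  shows "momentum0 q1 lam + p1 + h *\<^sub>R grad (\<lambda>q. Ham g V \<Gamma> q p1) q0 = 0"
proof -
  define FL where "FL = frechet_derivative (\<lambda>q. LLd h g V q q1) (at q0)"
  define FP where "FP \<alpha> = frechet_derivative (\<lambda>q. phid \<Gamma> \<alpha> q q1) (at q0)" for \<alpha>
  define FH where "FH = frechet_derivative (\<lambda>q. Ham g V \<Gamma> q p1) (at q0)"
  have "((\<lambda>q. LLd h g V q q1) has_derivative FL) (at q0)"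
    "((\<lambda>q. phid \<Gamma> \<alpha> q q1) has_derivative FP \<alpha>) (at q0)"
    "((\<lambda>q. Ham g V \<Gamma> q p1) has_derivative FH) (at q0)" for \<alpha>
    unfolding FL_def FP_def FH_def
    using differentiable_LLd differentiable_phid differentiable_Ham frechet_derivative_works
    by blast+
  moreover have "((\<lambda>q. p1 \<bullet> q) has_derivative (\<lambda>v. p1 \<bullet> v)) (at q0)"
    by (rule bounded_linear_imp_has_derivative[OF bounded_linear_inner_right])
  ultimately have "(gen_fun q1 p1 lam has_derivative
      (\<lambda>v. FL v + (\<Sum>\<alpha>\<in>UNIV. lam \<alpha> * FP \<alpha> v) + p1 \<bullet> v + h * FH v)) (at q0)"
    unfolding gen_fun_def by (intro has_derivative_add has_derivative_sum has_derivative_mult_right)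
  then have "(\<lambda>v. FL v + (\<Sum>\<alpha>\<in>UNIV. lam \<alpha> * FP \<alpha> v) + p1 \<bullet> v + h * FH v) = (\<lambda>v. 0)"
    using has_derivative_unique gen_fun_critical[OF R1 R2 R3] by blast
  then have "FL (axis i 1) + (\<Sum>\<alpha>\<in>UNIV. lam \<alpha> * FP \<alpha> (axis i 1)) + p1 \<bullet> axis i 1
      + h * FH (axis i 1) = 0" for i
    by (rule fun_cong)
  then show ?thesis
    by (simp add: vec_eq_iff momentum0_def d0_def grad_def FL_def FP_def FH_def sum_component
        inner_axis)
qed

lemma SigmaLd_iff_symplectic_Euler:
  assumes q1_in_U: "q1 \<in> U"
  shows "((q0, q1), (\<mu>0, \<mu>1)) \<in> SigmaLd U h g V \<Gamma> \<longleftrightarrow>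
    \<mu>1 = - \<mu>0 - h *\<^sub>R grad (\<lambda>q. Ham g V \<Gamma> q \<mu>1) q0 \<and>
    q1 = q0 + h *\<^sub>R grad (\<lambda>p. Ham g V \<Gamma> q0 p) \<mu>1"
    (is "_ \<longleftrightarrow> ?momentum \<and> ?position")
proof -
  let ?R1 = "q1 - q0 = lift \<Gamma> q0 (free_part (q1 - q0))"
  let ?R2 = "Pvec \<Gamma> q0 \<mu>1 = (1/h) *\<^sub>R (gammaM g \<Gamma> q0 *v free_part (q1 - q0))"
  let ?R3 = "\<lambda>lam. \<forall>\<alpha>. lam \<alpha> = \<mu>1 $ Inr \<alpha> - (1/h) * (g q0 *v (q1 - q0)) $ Inr \<alpha>"
  have second: "\<mu>1 = momentum1 q1 lam \<longleftrightarrow> ?R3 lam \<and> ?R2" if ?R1 for lam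
    unfolding momentum1_iff gamma_free_velocity[OF that] ..
  have first: "\<mu>1 = - momentum0 q1 lam - h *\<^sub>R grad (\<lambda>q. Ham g V \<Gamma> q \<mu>1) q0"
    if ?R1 ?R2 "?R3 lam" for lam
    using momentum_identity[OF that] by (simp add: algebra_simps eq_neg_iff_add_eq_0)
  show ?thesis
  proof
    assume "((q0, q1), (\<mu>0, \<mu>1)) \<in> SigmaLd U h g V \<Gamma>"
    then obtain lam where R1: ?R1 and "\<mu>0 = momentum0 q1 lam" "\<mu>1 = momentum1 q1 lam"
      using SigmaLd_member_iff[OF q1_in_U] by blast
    with second have "?R3 lam" ?R2 by blast+
    with R1 \<open>\<mu>0 = momentum0 q1 lam\<close> show "?momentum \<and> ?position"
      using first position_update_iff by blast
  next
    assume "?momentum \<and> ?position"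
    then have R1: ?R1 and R2: ?R2 and ?momentum
      using position_update_iff by blast+
    define lam where "lam \<alpha> = \<mu>1 $ Inr \<alpha> - (1/h) * (g q0 *v (q1 - q0)) $ Inr \<alpha>" for \<alpha>
    then have R3: "?R3 lam" by simp
    then have "\<mu>1 = momentum1 q1 lam" using second[OF R1] R2 by blast
    moreover have "\<mu>0 = momentum0 q1 lam" using first[OF R1 R2 R3] \<open>?momentum\<close>
      by (metis add_right_cancel diff_conv_add_uminus neg_equal_iff_equal)
    ultimately show "((q0, q1), (\<mu>0, \<mu>1)) \<in> SigmaLd U h g V \<Gamma>"
      using SigmaLd_member_iff[OF q1_in_U] R1 by blast
  qed
qed

end

theorem mainTheorem4:
  fixes U :: "(real^('k::finite + 'n::finite)) set"
    and g :: "real^('k + 'n) \<Rightarrow> real^('k + 'n)^('k + 'n)"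
    and V :: "real^('k + 'n) \<Rightarrow> real"
    and \<Gamma> :: "real^('k + 'n) \<Rightarrow> 'n \<Rightarrow> 'k \<Rightarrow> real"
    and h :: real
  assumes "open U"
    and "riemannian_metric U g"
    and "smooth_on U V"
    and "\<And>\<alpha> a. smooth_on U (\<lambda>q. \<Gamma> q \<alpha> a)"
    and "h > 0"
  shows "Upsilon ` SigmaLd U h g V \<Gamma> =
    {(q0, p0, q1, p1). q0 \<in> U \<and> q1 \<in> U \<and>
       p1 = p0 - h *\<^sub>R grad (\<lambda>q. Ham g V \<Gamma> q p1) q0 \<and>
       q1 = q0 + h *\<^sub>R grad (\<lambda>p. Ham g V \<Gamma> q0 p) p1}"
proof -
  have base_points: "q0 \<in> U \<and> q1 \<in> U" if "((q0, q1), (\<mu>0, \<mu>1)) \<in> SigmaLd U h g V \<Gamma>"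
    for q0 q1 \<mu>0 \<mu>1
    using that by (simp add: SigmaLd_def Cd_def)
  have fibre: "((q0, q1), (- p0, p1)) \<in> SigmaLd U h g V \<Gamma> \<longleftrightarrow>
      p1 = p0 - h *\<^sub>R grad (\<lambda>q. Ham g V \<Gamma> q p1) q0 \<and>
      q1 = q0 + h *\<^sub>R grad (\<lambda>p. Ham g V \<Gamma> q0 p) p1"
    if "q0 \<in> U" "q1 \<in> U" for q0 q1 p0 p1
  proof -
    interpret constrained_system_at U g V \<Gamma> h q0
      using assms that by unfold_locales
    show ?thesis using SigmaLd_iff_symplectic_Euler[OF that(2)] by simp
  qed
  have "((q0, q1), (- p0, p1)) \<in> SigmaLd U h g V \<Gamma> \<longleftrightarrow> q0 \<in> U \<and> q1 \<in> U \<and>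
      p1 = p0 - h *\<^sub>R grad (\<lambda>q. Ham g V \<Gamma> q p1) q0 \<and>
      q1 = q0 + h *\<^sub>R grad (\<lambda>p. Ham g V \<Gamma> q0 p) p1" for q0 q1 p0 p1
    using base_points fibre by blast
  moreover have "Upsilon ` SigmaLd U h g V \<Gamma>
      = {(q0, p0, q1, p1). ((q0, q1), (- p0, p1)) \<in> SigmaLd U h g V \<Gamma>}"
    by (force simp: Upsilon_def image_iff)
  ultimately show ?thesis by simp
qed

end
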